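(* Let $\Omega:S^1\to\mathbb{R}$ be of class $C^{m-1}(S^1)$ for some integer $m\ge2$, such that $\Omega'(\theta)+1>0$ for all $\theta$. Then there exist constants $\epsilon_0>0$ and $\mu>0$ such that whenever $0<\epsilon<\epsilon_0$, \[ \left|e^{-iE_m\Omega(r,\theta)}\right|\le r^{1-\mu}\quad\text{for all }\theta\text{ and }1\le r\le2^\epsilon, \qquad \left|e^{iE_m\Omega(r,\theta)}\right|\le r^{\mu-1}\quad\text{for all }\theta\text{ and }2^{-\epsilon}\le r\le1. \]
   Context: For a $C^{m-1}$ function $f$ on the circle, $E_mf(r,\theta)=\sum_{p=0}^{m-1}\frac{f^{(p)}(\theta)}{p!}(-i\log r)^p$ for $r>0$, $\theta\in S^1$. *)

theory Defs
  imports "HOL-Analysis.Analysis"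
begin

text \<open>Functions on the circle are identified with 2pi-periodic functions on the reals;
  the angle theta is a real number.\<close>

definition circle_fun :: "(real \<Rightarrow> 'a) \<Rightarrow> bool" where
  "circle_fun f \<longleftrightarrow> (\<forall>\<theta>. f (\<theta> + 2 * pi) = f \<theta>)"

definition C_k :: "nat \<Rightarrow> (real \<Rightarrow> real) \<Rightarrow> bool" where
  "C_k k f \<longleftrightarrow> (\<forall>j<k. \<forall>x. (deriv ^^ j) f differentiable (at x))
                 \<and> continuous_on UNIV ((deriv ^^ k) f)"

definition E :: "nat \<Rightarrow> (real \<Rightarrow> real) \<Rightarrow> real \<Rightarrow> real \<Rightarrow> complex" where
  "E m f r \<theta> = (\<Sum>p<m. complex_of_real ((deriv ^^ p) f \<theta> / fact p) * (- \<i> * complex_of_real (ln r)) ^ p)"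

end

theory Submission
  imports Defs
begin

text \<open>Write \<open>L = ln r\<close>. The terms of order \<open>p \<ge> 2\<close> of \<open>E\<^sub>m\<Omega>\<close> are \<open>O(L\<^sup>2)\<close> uniformly in
  \<open>\<theta>\<close>, because the derivatives of a periodic \<open>C\<^sup>m\<^sup>-\<^sup>1\<close> function are bounded; hence
  \<open>Im E\<^sub>m\<Omega>(r,\<theta>) = -\<Omega>'(\<theta>) L + O(L\<^sup>2)\<close>. Since \<open>|exp(\<mp>i z)| = exp(\<plusminus>Im z)\<close> and, by
  compactness of the circle, \<open>\<Omega>' + 1 \<ge> \<delta>\<close> for some \<open>\<delta> > 0\<close>, taking \<open>|L|\<close> so small that the
  error is at most \<open>\<delta>/2 |L|\<close> gives both bounds with \<open>\<mu> = \<delta>/2\<close>.\<close>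

lemma periodic_shift_int:
  fixes g :: "real \<Rightarrow> 'a"
  assumes "\<And>x. g (x + c) = g x"
  shows "g (x + of_int k * c) = g x"
proof (induction k rule: int_induct[where k = 0])
  case base
  then show ?case by simp
next
  case (step1 i)
  have "g (x + of_int (i + 1) * c) = g ((x + of_int i * c) + c)"
    by (simp add: algebra_simps)
  with step1 assms show ?case by simp
next
  case (step2 i)
  have "g (x + of_int i * c) = g ((x + of_int (i - 1) * c) + c)"
    by (simp add: algebra_simps)
  with step2 assms show ?case by simp
qed

lemma range_periodic:
  fixes g :: "real \<Rightarrow> 'a"
  assumes "\<And>x. g (x + c) = g x" and "c > 0"
  shows "range g = g ` {0..c}"
proof -
  have "g x \<in> g ` {0..c}" for x
  proof
    define k where "k = \<lfloor>x / c\<rfloor>"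
    have "of_int k \<le> x / c" "x / c < of_int k + 1"
      unfolding k_def by linarith+
    with \<open>c > 0\<close> show "x - of_int k * c \<in> {0..c}"
      by (auto simp: field_simps)
    show "g x = g (x - of_int k * c)"
      using periodic_shift_int[of g c "x - of_int k * c" k] assms(1) by simp
  qed
  then show ?thesis by auto
qed

lemma compact_range_periodic:
  fixes g :: "real \<Rightarrow> 'a::topological_space"
  assumes "\<And>x. g (x + c) = g x" and "c > 0" and "continuous_on UNIV g"
  shows "compact (range g)"
  unfolding range_periodic[of g c, OF assms(1,2)]
  by (rule compact_continuous_image[OF continuous_on_subset[OF assms(3)]]) auto

lemma periodic_pos_bounded_below:
  fixes g :: "real \<Rightarrow> real"
  assumes "\<And>x. g (x + c) = g x" and "c > 0" and "continuous_on UNIV g" and "\<And>x. g x > 0"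
  obtains \<delta> where "\<delta> > 0" and "\<And>x. \<delta> \<le> g x"
proof -
  obtain x0 where "\<forall>y\<in>range g. g x0 \<le> y"
    using compact_attains_inf[OF compact_range_periodic[of g c, OF assms(1-3)]] by auto
  with assms(4) that show ?thesis by blast
qed

lemma deriv_periodic:
  fixes g :: "real \<Rightarrow> real"
  assumes "\<And>x. g (x + c) = g x"
  shows "deriv g (x + c) = deriv g x"
proof -
  have "(\<lambda>x. g (x + c)) = g" using assms by auto
  then show ?thesis unfolding deriv_def by (simp add: DERIV_shift)
qed

lemma higher_deriv_periodic:
  fixes g :: "real \<Rightarrow> real"
  assumes "\<And>x. g (x + c) = g x"
  shows "(deriv ^^ p) g (x + c) = (deriv ^^ p) g x"
proof (induction p arbitrary: x)
  case 0
  then show ?case using assms by simp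
next
  case (Suc p)
  then show ?case using deriv_periodic[of "(deriv ^^ p) g" c, OF Suc.IH] by simp
qed

lemma C_k_continuous_higher_deriv:
  assumes "C_k k f" and "p \<le> k"
  shows "continuous_on UNIV ((deriv ^^ p) f)"
proof (cases "p = k")
  case True
  with assms(1) show ?thesis unfolding C_k_def by simp
next
  case False
  with assms have "\<forall>x. (deriv ^^ p) f differentiable (at x)"
    unfolding C_k_def by simp
  then show ?thesis
    by (simp add: continuous_at_imp_continuous_on differentiable_imp_continuous_within)
qed

lemma C_k_periodic_higher_derivs_bounded:
  assumes "C_k k f" and "\<And>x. f (x + c) = f x" and "c > 0"
  obtains B where "\<And>p x. p \<le> k \<Longrightarrow> \<bar>(deriv ^^ p) f x\<bar> \<le> B"
proof -
  have "compact (range ((deriv ^^ p) f))" if "p \<le> k" for p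
    using compact_range_periodic[OF higher_deriv_periodic[of f c, OF assms(2)] assms(3)
        C_k_continuous_higher_deriv[OF assms(1) that]] .
  then have "bounded (\<Union>p\<le>k. range ((deriv ^^ p) f))"
    by (auto intro: compact_imp_bounded)
  with that show ?thesis by (auto simp: bounded_real)
qed

lemma Im_E_linearization:
  assumes "m \<ge> 2" and B: "\<And>p \<theta>. p < m \<Longrightarrow> \<bar>(deriv ^^ p) f \<theta>\<bar> \<le> B"
    and "r > 0" and L: "\<bar>ln r\<bar> \<le> 1"
  shows "\<bar>Im (E m f r \<theta>) + deriv f \<theta> * ln r\<bar> \<le> real m * B * (ln r)\<^sup>2"
proof -
  define t where "t p = complex_of_real ((deriv ^^ p) f \<theta> / fact p) * (- \<i> * ln r) ^ p" for p
  have "\<bar>f \<theta>\<bar> \<le> B" using B[of 0 \<theta>] \<open>m \<ge> 2\<close> by simp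
  then have "B \<ge> 0" by linarith
  have "E m f r \<theta> = (\<Sum>p<2. t p) + (\<Sum>p\<in>{2..<m}. t p)"
    unfolding E_def t_def lessThan_atLeast0 using \<open>m \<ge> 2\<close> by (simp add: sum.atLeastLessThan_concat)
  moreover have "(\<Sum>p<2. t p) = f \<theta> - \<i> * deriv f \<theta> * ln r"
    by (simp add: t_def eval_nat_numeral)
  ultimately have "\<bar>Im (E m f r \<theta>) + deriv f \<theta> * ln r\<bar> = \<bar>Im (\<Sum>p\<in>{2..<m}. t p)\<bar>"
    by simp
  also have "\<dots> \<le> norm (\<Sum>p\<in>{2..<m}. t p)"
    by (rule abs_Im_le_cmod)
  also have "\<dots> \<le> (\<Sum>p\<in>{2..<m}. norm (t p))"
    by (rule norm_sum)
  also have "\<dots> \<le> real (card {2..<m}) * (B * (ln r)\<^sup>2)"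
  proof (rule sum_bounded_above)
    fix p assume p: "p \<in> {2..<m}"
    have "\<bar>(deriv ^^ p) f \<theta>\<bar> / fact p \<le> \<bar>(deriv ^^ p) f \<theta>\<bar>"
      by (simp add: divide_le_eq fact_ge_1 mult_le_cancel_left1)
    also have "\<dots> \<le> B"
      using B p by simp
    finally have "\<bar>(deriv ^^ p) f \<theta>\<bar> / fact p \<le> B" .
    moreover have "\<bar>ln r\<bar> ^ p \<le> (ln r)\<^sup>2"
      using power_decreasing[of 2 p "\<bar>ln r\<bar>"] p L by simp
    moreover have "norm (t p) = \<bar>(deriv ^^ p) f \<theta>\<bar> / fact p * \<bar>ln r\<bar> ^ p"
      unfolding t_def by (simp add: norm_mult norm_power norm_divide)
    ultimately show "norm (t p) \<le> B * (ln r)\<^sup>2"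
      using \<open>B \<ge> 0\<close> by (metis abs_ge_zero mult_mono zero_le_power)
  qed
  also have "\<dots> \<le> real m * (B * (ln r)\<^sup>2)"
    using \<open>B \<ge> 0\<close> by (intro mult_right_mono) auto
  finally show ?thesis by (simp only: mult.assoc)
qed

lemma Im_E_linearization_small:
  assumes "m \<ge> 2" and B: "\<And>p \<theta>. p < m \<Longrightarrow> \<bar>(deriv ^^ p) f \<theta>\<bar> \<le> B" and "c > 0"
  obtains \<eta> where "\<eta> > 0"
    and "\<And>r \<theta>. r > 0 \<Longrightarrow> \<bar>ln r\<bar> \<le> \<eta> \<Longrightarrow>
           \<bar>Im (E m f r \<theta>) + deriv f \<theta> * ln r\<bar> \<le> c * \<bar>ln r\<bar>"
proof
  have "\<bar>f 0\<bar> \<le> B" using B[of 0 0] \<open>m \<ge> 2\<close> by simp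
  then have mB: "real m * B + 1 > 0" by (simp add: add_nonneg_pos)
  define \<eta> where "\<eta> = min 1 (c / (real m * B + 1))"
  show "\<eta> > 0" unfolding \<eta>_def using \<open>c > 0\<close> mB by simp
  have "\<eta> \<le> c / (real m * B + 1)" by (simp add: \<eta>_def)
  then have \<eta>c: "(real m * B + 1) * \<eta> \<le> c" using mB by (simp add: pos_le_divide_eq mult.commute)
  fix r \<theta> :: real
  assume "r > 0" and L: "\<bar>ln r\<bar> \<le> \<eta>"
  have "\<bar>Im (E m f r \<theta>) + deriv f \<theta> * ln r\<bar> \<le> real m * B * (ln r)\<^sup>2"
    using Im_E_linearization[OF \<open>m \<ge> 2\<close> B \<open>r > 0\<close>] L by (simp add: \<eta>_def)
  also have "\<dots> \<le> (real m * B + 1) * (ln r)\<^sup>2"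
    by (intro mult_right_mono) auto
  also have "\<dots> = (real m * B + 1) * \<bar>ln r\<bar> * \<bar>ln r\<bar>"
    by (simp add: power2_eq_square mult.assoc)
  also have "\<dots> \<le> (real m * B + 1) * \<eta> * \<bar>ln r\<bar>"
    using L mB by (intro mult_right_mono) auto
  also have "\<dots> \<le> c * \<bar>ln r\<bar>"
    using \<eta>c by (intro mult_right_mono) auto
  finally show "\<bar>Im (E m f r \<theta>) + deriv f \<theta> * ln r\<bar> \<le> c * \<bar>ln r\<bar>" .
qed

lemma norm_exp_minus_ii_le_powr:
  fixes z :: complex
  assumes "1 \<le> r" and "\<bar>Im z + a * ln r\<bar> \<le> \<mu> * \<bar>ln r\<bar>" and "2 * \<mu> \<le> a + 1"
  shows "norm (exp (- \<i> * z)) \<le> r powr (1 - \<mu>)"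
proof -
  have "ln r \<ge> 0" using assms(1) by simp
  with assms(2) have "Im z \<le> (\<mu> - a) * ln r"
    by (simp add: algebra_simps)
  also have "\<dots> \<le> (1 - \<mu>) * ln r"
    using assms(3) \<open>ln r \<ge> 0\<close> by (intro mult_right_mono) auto
  finally show ?thesis
    using assms(1) by (simp add: powr_def)
qed

lemma norm_exp_ii_le_powr:
  fixes z :: complex
  assumes "0 < r" "r \<le> 1" and "\<bar>Im z + a * ln r\<bar> \<le> \<mu> * \<bar>ln r\<bar>" and "2 * \<mu> \<le> a + 1"
  shows "norm (exp (\<i> * z)) \<le> r powr (\<mu> - 1)"
proof -
  have "ln r \<le> 0" using assms(1,2) by simp
  with assms(3) have "- Im z \<le> (a - \<mu>) * ln r"
    by (simp add: algebra_simps)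
  also have "\<dots> \<le> (\<mu> - 1) * ln r"
    using assms(4) \<open>ln r \<le> 0\<close> by (intro mult_right_mono_neg) auto
  finally show ?thesis
    using assms(1) by (simp add: powr_def)
qed

lemma between_powr_imp_abs_ln_le:
  fixes b r \<epsilon> :: real
  assumes "b > 1" and "b powr (- \<epsilon>) \<le> r" and "r \<le> b powr \<epsilon>"
  shows "r > 0" and "\<bar>ln r\<bar> \<le> \<epsilon> * ln b"
proof -
  show "r > 0"
    using assms(1,2) powr_gt_zero[of b "- \<epsilon>"] by linarith
  then have "ln (b powr (- \<epsilon>)) \<le> ln r" "ln r \<le> ln (b powr \<epsilon>)"
    using assms by (simp_all del: ln_powr)
  with assms(1) show "\<bar>ln r\<bar> \<le> \<epsilon> * ln b"
    by (simp add: ln_powr)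
qed

lemma norm_exp_powr_bounds_if_linearizable:
  fixes Z :: "real \<Rightarrow> real \<Rightarrow> complex" and a :: "real \<Rightarrow> real"
  assumes "\<delta> > 0" and "\<eta> > 0" and \<delta>: "\<And>\<theta>. \<delta> \<le> a \<theta> + 1"
    and lin: "\<And>r \<theta>. r > 0 \<Longrightarrow> \<bar>ln r\<bar> \<le> \<eta> \<Longrightarrow> \<bar>Im (Z r \<theta>) + a \<theta> * ln r\<bar> \<le> \<delta> / 2 * \<bar>ln r\<bar>"
  shows "\<exists>\<epsilon>0 > 0. \<exists>\<mu> > 0. \<forall>\<epsilon>. 0 < \<epsilon> \<and> \<epsilon> < \<epsilon>0 \<longrightarrow>
           (\<forall>\<theta> r. 1 \<le> r \<and> r \<le> 2 powr \<epsilon> \<longrightarrow> norm (exp (- \<i> * Z r \<theta>)) \<le> r powr (1 - \<mu>)) \<and>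
           (\<forall>\<theta> r. 2 powr (- \<epsilon>) \<le> r \<and> r \<le> 1 \<longrightarrow> norm (exp (\<i> * Z r \<theta>)) \<le> r powr (\<mu> - 1))"
proof -
  have one_between: "2 powr (- \<epsilon>) \<le> 1" "1 \<le> 2 powr \<epsilon>" if "\<epsilon> > 0" for \<epsilon> :: real
    using that by (simp_all add: powr_minus_divide ge_one_powr_ge_zero)
  have near_one: "r > 0 \<and> \<bar>ln r\<bar> \<le> \<eta>"
    if "0 < \<epsilon> \<and> \<epsilon> < \<eta> / ln 2" and "2 powr (- \<epsilon>) \<le> r" and "r \<le> 2 powr \<epsilon>" for \<epsilon> r :: real
    using between_powr_imp_abs_ln_le[of 2 \<epsilon> r] that by (simp add: pos_less_divide_eq)
  show ?thesis
  proof (rule exI[of _ "\<eta> / ln 2"], intro conjI exI[of _ "\<delta> / 2"] allI impI)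
    show "\<eta> / ln 2 > 0" "\<delta> / 2 > 0"
      using \<open>\<eta> > 0\<close> \<open>\<delta> > 0\<close> by auto
  next
    fix \<epsilon> \<theta> r :: real
    assume "0 < \<epsilon> \<and> \<epsilon> < \<eta> / ln 2" and r: "1 \<le> r \<and> r \<le> 2 powr \<epsilon>"
    with near_one one_between have "r > 0" "\<bar>ln r\<bar> \<le> \<eta>"
      by (meson order_trans)+
    then show "norm (exp (- \<i> * Z r \<theta>)) \<le> r powr (1 - \<delta> / 2)"
      using lin[of r \<theta>] r \<delta>[of \<theta>] by (intro norm_exp_minus_ii_le_powr) auto
  next
    fix \<epsilon> \<theta> r :: real
    assume "0 < \<epsilon> \<and> \<epsilon> < \<eta> / ln 2" and r: "2 powr (- \<epsilon>) \<le> r \<and> r \<le> 1"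
    with near_one one_between have "r > 0" "\<bar>ln r\<bar> \<le> \<eta>"
      by (meson order_trans)+
    then show "norm (exp (\<i> * Z r \<theta>)) \<le> r powr (\<delta> / 2 - 1)"
      using lin[of r \<theta>] r \<delta>[of \<theta>] by (intro norm_exp_ii_le_powr) auto
  qed
qed

theorem lemma4p8:
  fixes \<Omega> :: "real \<Rightarrow> real" and m :: nat
  assumes "m \<ge> 2"
    and "circle_fun \<Omega>"
    and "C_k (m - 1) \<Omega>"
    and "\<And>\<theta>. deriv \<Omega> \<theta> + 1 > 0"
  shows "\<exists>\<epsilon>0 > 0. \<exists>\<mu> > 0. \<forall>\<epsilon>. 0 < \<epsilon> \<and> \<epsilon> < \<epsilon>0 \<longrightarrow>
           (\<forall>\<theta> r. 1 \<le> r \<and> r \<le> 2 powr \<epsilon> \<longrightarrow>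
              norm (exp (- \<i> * E m \<Omega> r \<theta>)) \<le> r powr (1 - \<mu>)) \<and>
           (\<forall>\<theta> r. 2 powr (- \<epsilon>) \<le> r \<and> r \<le> 1 \<longrightarrow>
              norm (exp (\<i> * E m \<Omega> r \<theta>)) \<le> r powr (\<mu> - 1))"
proof -
  have per: "\<And>\<theta>. \<Omega> (\<theta> + 2 * pi) = \<Omega> \<theta>"
    using assms(2) unfolding circle_fun_def by simp
  obtain B where "\<And>p \<theta>. p \<le> m - 1 \<Longrightarrow> \<bar>(deriv ^^ p) \<Omega> \<theta>\<bar> \<le> B"
    using C_k_periodic_higher_derivs_bounded[OF assms(3) per] by auto
  then have B: "\<And>p \<theta>. p < m \<Longrightarrow> \<bar>(deriv ^^ p) \<Omega> \<theta>\<bar> \<le> B"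
    by simp
  have "continuous_on UNIV (\<lambda>\<theta>. deriv \<Omega> \<theta> + 1)"
    using C_k_continuous_higher_deriv[OF assms(3), of 1] assms(1) by (simp add: continuous_intros)
  then obtain \<delta> where "\<delta> > 0" and \<delta>: "\<And>\<theta>. \<delta> \<le> deriv \<Omega> \<theta> + 1"
    using periodic_pos_bounded_below[of "\<lambda>\<theta>. deriv \<Omega> \<theta> + 1" "2 * pi"]
      higher_deriv_periodic[of \<Omega> "2 * pi" 1, OF per] assms(4) by auto
  obtain \<eta> where "\<eta> > 0" and lin: "\<And>r \<theta>. r > 0 \<Longrightarrow> \<bar>ln r\<bar> \<le> \<eta> \<Longrightarrow>
      \<bar>Im (E m \<Omega> r \<theta>) + deriv \<Omega> \<theta> * ln r\<bar> \<le> \<delta> / 2 * \<bar>ln r\<bar>"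
    using Im_E_linearization_small[OF assms(1) B, of "\<delta> / 2"] \<open>\<delta> > 0\<close> by auto
  show ?thesis
    using norm_exp_powr_bounds_if_linearizable[OF \<open>\<delta> > 0\<close> \<open>\<eta> > 0\<close> \<delta> lin] .
qed

end
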